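(* There is no binary linear $[n,k,d]$ code $C$ with $\mathbf{1}_n\in C$ such that, for some positive integer $t$, $$d^\perp-t=\#\{u \mid C_u\neq\emptyset,\ 0<u\le n-t\}=3,$$ the nonzero weights of $C$ are exactly $d,\ n/2,\ n-d,\ n$ (with $n$ even), and $d^\perp>8$.
   Context: $\mathbf{1}_n$ is the all-ones vector; $C^\perp$ is the dual code with respect to the standard inner product and $d^\perp$ its minimum nonzero weight; $C_u=\{c\in C:\mathrm{wt}(c)=u\}$ (Hamming weight). The paper notes that in the case $d^\perp-t=3$ the weight distribution of $C$ is supported on $0,d,n/2,n-d,n$ with $n$ even, and works under this assumption throughout. *)

theory Defs
  imports Main
begin

text \<open>Binary vectors of length n are bool lists (True = 1, False = 0);
  addition is componentwise xor.\<close>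

definition bvec :: "nat \<Rightarrow> bool list set" where
  "bvec n = {v. length v = n}"

definition vadd :: "bool list \<Rightarrow> bool list \<Rightarrow> bool list" where
  "vadd u v = map2 (\<noteq>) u v"

definition wt :: "bool list \<Rightarrow> nat" where
  "wt v = length (filter id v)"

definition orth :: "bool list \<Rightarrow> bool list \<Rightarrow> bool" where
  "orth u v \<longleftrightarrow> even (length (filter id (map2 (\<and>) u v)))"

definition binary_linear_code :: "nat \<Rightarrow> bool list set \<Rightarrow> bool" where
  "binary_linear_code n C \<longleftrightarrow> C \<subseteq> bvec n \<and> replicate n False \<in> C \<and>
     (\<forall>u\<in>C. \<forall>v\<in>C. vadd u v \<in> C)"

definition dual_code :: "nat \<Rightarrow> bool list set \<Rightarrow> bool list set" where
  "dual_code n C = {v \<in> bvec n. \<forall>c\<in>C. orth c v}"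

definition is_min_weight :: "bool list set \<Rightarrow> nat \<Rightarrow> bool" where
  "is_min_weight D m \<longleftrightarrow> (\<exists>c\<in>D. 0 < wt c \<and> wt c = m) \<and> (\<forall>c\<in>D. 0 < wt c \<longrightarrow> m \<le> wt c)"

definition is_nkd_code :: "nat \<Rightarrow> nat \<Rightarrow> nat \<Rightarrow> bool list set \<Rightarrow> bool" where
  "is_nkd_code n k d C \<longleftrightarrow> binary_linear_code n C \<and> card C = 2 ^ k \<and> is_min_weight C d"

definition nz_weights :: "bool list set \<Rightarrow> nat set" where
  "nz_weights C = {u. 0 < u \<and> (\<exists>c\<in>C. wt c = u)}"

end

theory Submission imports Defs begin

text \<open>Write \<open>x(c) = n - 2 wt(c)\<close> (\<open>bias c\<close> below). Because \<open>d\<^sup>\<perp> > 8\<close>, every nonzero vector of weight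
  at most 8 fails to be orthogonal to \<open>C\<close>, so by the character sum over \<open>C\<close> the power moments
  \<open>\<Sum>\<^sub>c\<^sub>\<in>\<^sub>C x(c)\<^sup>j\<close>, \<open>j \<le> 8\<close>, equal \<open>|C| / 2\<^sup>n\<close> times those of the whole space, which are
  explicit polynomials in \<open>n\<close>. The weight hypothesis says \<open>x(c)\<^sup>2 \<in> {0, (n-2d)\<^sup>2, n\<^sup>2}\<close>, so
  \<open>p(x) = x\<^sup>2 (x\<^sup>2 - (n-2d)\<^sup>2) (x\<^sup>2 - n\<^sup>2)\<close> and \<open>x\<^sup>2 p(x)\<close> vanish on \<open>C\<close>. Summing \<open>p\<close> over \<open>C\<close>
  forces \<open>(n-2d)\<^sup>2 = 3n - 8\<close>; summing \<open>x\<^sup>2 p\<close> then gives \<open>6 n (n-1) (n-2) (n-3) (n-4) |C| = 0\<close>,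
  impossible for \<open>n \<ge> 9\<close>.\<close>

section \<open>Binary vectors\<close>

lemma length_vadd [simp]: "length (vadd u v) = min (length u) (length v)"
  by (simp add: vadd_def)

lemma vadd_Cons [simp]: "vadd (a # u) (b # v) = (a \<noteq> b) # vadd u v"
  by (simp add: vadd_def)

lemma vadd_vadd_cancel: "length u = length v \<Longrightarrow> vadd u (vadd u v) = v"
  by (induction u v rule: list_induct2) (auto simp: vadd_def)

lemma orth_Cons [simp]: "orth (a # u) (b # v) \<longleftrightarrow> (orth u v \<longleftrightarrow> \<not> (a \<and> b))"
  by (auto simp: orth_def)

lemma orth_Nil [simp]: "orth [] []"
  by (simp add: orth_def)

lemma orth_commute: "length u = length v \<Longrightarrow> orth u v \<longleftrightarrow> orth v u"
  by (induction u v rule: list_induct2) auto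

lemma orth_vadd_right:
  assumes "length u = length c" and "length v = length c"
  shows "orth c (vadd u v) \<longleftrightarrow> (orth c u \<longleftrightarrow> orth c v)"
  using assms
proof (induction c arbitrary: u v)
  case (Cons a c)
  then obtain x u' y v' where "u = x # u'" "v = y # v'" by (metis length_Suc_conv)
  with Cons show ?case by auto
qed (simp add: vadd_def)

lemma orth_zero_right: "orth c (replicate n False)"
proof -
  have "filter id (map2 (\<and>) c (replicate n False)) = []"
    by (auto simp: filter_empty_conv in_set_zip)
  then show ?thesis by (simp add: orth_def)
qed

lemma orth_eq_even_card:
  assumes "length u = length v"
  shows "orth u v \<longleftrightarrow> even (card {k. k < length u \<and> u ! k \<and> v ! k})"
proof -
  have "{k. k < length (map2 (\<and>) u v) \<and> id (map2 (\<and>) u v ! k)} = {k. k < length u \<and> u ! k \<and> v ! k}"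
    using assms by auto
  then show ?thesis by (simp only: orth_def length_filter_conv_card)
qed

lemma wt_eq_card: "wt v = card {k. k < length v \<and> v ! k}"
  by (simp add: wt_def length_filter_conv_card)

lemma wt_le_length: "wt v \<le> length v"
  by (simp add: wt_def)

lemma wt_eq_0_iff: "wt v = 0 \<longleftrightarrow> v = replicate (length v) False"
  by (auto simp: wt_def filter_empty_conv intro: replicate_eqI) (metis in_set_replicate)

lemma wt_vadd_le: "wt (vadd u v) \<le> wt u + wt v"
proof -
  have "{k. k < length (vadd u v) \<and> vadd u v ! k}
      \<subseteq> {k. k < length u \<and> u ! k} \<union> {k. k < length v \<and> v ! k}"
    by (auto simp: vadd_def)
  then have "wt (vadd u v) \<le> card ({k. k < length u \<and> u ! k} \<union> {k. k < length v \<and> v ! k})"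
    unfolding wt_eq_card by (intro card_mono) auto
  also have "\<dots> \<le> wt u + wt v"
    unfolding wt_eq_card by (rule card_Un_le)
  finally show ?thesis .
qed

definition unit_vec :: "nat \<Rightarrow> nat \<Rightarrow> bool list" where
  "unit_vec n i = map (\<lambda>k. k = i) [0..<n]"

lemma length_unit_vec [simp]: "length (unit_vec n i) = n"
  by (simp add: unit_vec_def)

lemma wt_unit_vec: "i < n \<Longrightarrow> wt (unit_vec n i) = 1"
proof -
  assume "i < n"
  then have "{k. k < length (unit_vec n i) \<and> unit_vec n i ! k} = {i}"
    by (auto simp: unit_vec_def)
  then show ?thesis by (simp add: wt_eq_card)
qed

lemma orth_unit_vec_right:
  assumes "length c = n" and "i < n"
  shows "orth c (unit_vec n i) \<longleftrightarrow> \<not> c ! i"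
proof -
  have "{k. k < length c \<and> c ! k \<and> unit_vec n i ! k} = (if c ! i then {i} else {})"
    using assms by (auto simp: unit_vec_def)
  then show ?thesis using assms by (simp add: orth_eq_even_card)
qed

fun unit_sum :: "nat \<Rightarrow> nat list \<Rightarrow> bool list" where
  "unit_sum n [] = replicate n False"
| "unit_sum n (i # ks) = vadd (unit_vec n i) (unit_sum n ks)"

lemma length_unit_sum [simp]: "length (unit_sum n ks) = n"
  by (induction ks) auto

lemma wt_unit_sum_le: "set ks \<subseteq> {..<n} \<Longrightarrow> wt (unit_sum n ks) \<le> length ks"
proof (induction ks)
  case Nil then show ?case by (simp add: wt_def)
next
  case (Cons i ks)
  then show ?case
    using wt_vadd_le[of "unit_vec n i" "unit_sum n ks"] wt_unit_vec[of i n] by auto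
qed

section \<open>Dual codes and character sums\<close>

lemma binary_linear_code_bvec: "binary_linear_code n (bvec n)"
  by (auto simp: binary_linear_code_def bvec_def)

lemma finite_bvec: "finite (bvec n)"
  using finite_lists_length_eq[of "UNIV :: bool set" n] by (simp add: bvec_def)

lemma card_bvec: "card (bvec n) = 2 ^ n"
  using card_lists_length_eq[of "UNIV :: bool set" n] by (simp add: bvec_def)

lemma dual_code_bvec: "dual_code n (bvec n) = {replicate n False}"
proof
  show "dual_code n (bvec n) \<subseteq> {replicate n False}"
  proof
    fix v assume v: "v \<in> dual_code n (bvec n)"
    then have len: "length v = n" by (simp add: dual_code_def bvec_def)
    have "\<not> v ! k" if "k < n" for k
    proof -
      have "orth (unit_vec n k) v" using v by (simp add: dual_code_def bvec_def)
      then show ?thesis using orth_unit_vec_right[OF len that] orth_commute len by simp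
    qed
    then show "v \<in> {replicate n False}" using len by (simp add: list_eq_iff_nth_eq)
  qed
qed (auto simp: dual_code_def bvec_def orth_zero_right)

lemma sum_orth_sign:
  assumes C: "binary_linear_code n C" and v: "v \<in> bvec n"
  shows "(\<Sum>c\<in>C. if orth c v then 1 else -1 :: int) = (if v \<in> dual_code n C then int (card C) else 0)"
proof (cases "v \<in> dual_code n C")
  case False
  then obtain c0 where c0: "c0 \<in> C" "\<not> orth c0 v"
    using v by (auto simp: dual_code_def)
  have len: "length c = n" if "c \<in> C" for c
    using C that by (auto simp: binary_linear_code_def bvec_def)
  have closed: "vadd c0 c \<in> C" if "c \<in> C" for c
    using C c0 that by (simp add: binary_linear_code_def)
  let ?f = "\<lambda>c. if orth c v then 1 else -1 :: int"
  \<comment> \<open>translation by \<open>c\<^sub>0\<close> permutes \<open>C\<close> and flips every sign\<close>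
  have "(\<Sum>c\<in>C. ?f c) = (\<Sum>c\<in>C. ?f (vadd c0 c))"
    by (rule sum.reindex_bij_witness[where i="vadd c0" and j="vadd c0"])
       (use c0 len closed in \<open>auto simp: vadd_vadd_cancel\<close>)
  also have "\<dots> = (\<Sum>c\<in>C. - ?f c)"
    using c0 len v
    by (intro sum.cong refl) (auto simp: bvec_def orth_commute orth_vadd_right)
  finally show ?thesis using False by (simp add: sum_negf)
qed (auto simp: dual_code_def)

section \<open>Power moments of \<open>n - 2 wt(c)\<close>\<close>

definition bit_sign :: "bool \<Rightarrow> int" where
  "bit_sign b = (if b then -1 else 1)"

definition bias :: "bool list \<Rightarrow> int" where
  "bias c = (\<Sum>b\<leftarrow>c. bit_sign b)"

lemma bias_eq: "bias c = int (length c) - 2 * int (wt c)"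
  by (induction c) (auto simp: bias_def wt_def bit_sign_def)

lemma bias_eq_sum_nth: "bias c = (\<Sum>i<length c. bit_sign (c ! i))"
  by (simp add: bias_def sum_list_sum_nth atLeast0LessThan)

lemma prod_bit_sign_eq_orth:
  "length c = n \<Longrightarrow> set ks \<subseteq> {..<n} \<Longrightarrow>
   (\<Prod>i\<leftarrow>ks. bit_sign (c ! i)) = (if orth c (unit_sum n ks) then 1 else -1)"
proof (induction ks)
  case Nil then show ?case by (simp add: orth_zero_right)
next
  case (Cons i ks)
  then have "orth c (unit_sum n (i # ks)) \<longleftrightarrow> (\<not> c ! i \<longleftrightarrow> orth c (unit_sum n ks))"
    by (simp add: orth_vadd_right orth_unit_vec_right)
  with Cons show ?case by (auto simp: bit_sign_def)
qed

definition index_lists :: "nat \<Rightarrow> nat \<Rightarrow> nat list set" where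
  "index_lists n j = {ks. set ks \<subseteq> {..<n} \<and> length ks = j}"

lemma finite_index_lists: "finite (index_lists n j)"
  unfolding index_lists_def by (rule finite_lists_length_eq) simp

lemma index_lists_Suc: "index_lists n (Suc j) = (\<lambda>(i, ks). i # ks) ` ({..<n} \<times> index_lists n j)"
  by (force simp: index_lists_def length_Suc_conv)

lemma bias_power_expand:
  "length c = n \<Longrightarrow> bias c ^ j = (\<Sum>ks\<in>index_lists n j. \<Prod>i\<leftarrow>ks. bit_sign (c ! i))"
proof (induction j)
  case 0
  have "index_lists n 0 = {[]}" by (auto simp: index_lists_def)
  then show ?case by simp
next
  case (Suc j)
  have "bias c ^ Suc j
      = (\<Sum>i<n. bit_sign (c ! i)) * (\<Sum>ks\<in>index_lists n j. \<Prod>i\<leftarrow>ks. bit_sign (c ! i))"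
    using Suc by (simp add: bias_eq_sum_nth)
  also have "\<dots> = (\<Sum>p\<in>{..<n} \<times> index_lists n j. \<Prod>i\<leftarrow>fst p # snd p. bit_sign (c ! i))"
    by (simp add: sum_product sum.cartesian_product case_prod_beta)
  also have "\<dots> = (\<Sum>ks\<in>index_lists n (Suc j). \<Prod>i\<leftarrow>ks. bit_sign (c ! i))"
    unfolding index_lists_Suc by (subst sum.reindex) (auto simp: inj_on_def case_prod_beta)
  finally show ?case .
qed

text \<open>Expanding \<open>bias c ^ j\<close> writes it as a sum of characters \<open>c \<mapsto> (-1)\<^sup>c\<^sup>\<cdot>\<^sup>v\<close> with
  \<open>wt v \<le> j\<close>; summed over \<open>C\<close>, only those with \<open>v \<in> C\<^sup>\<perp>\<close>, i.e. \<open>v = 0\<close>, survive.\<close>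
lemma code_moment:
  assumes C: "binary_linear_code n C"
    and dual: "\<forall>v\<in>dual_code n C. 0 < wt v \<longrightarrow> j < wt v"
  shows "(\<Sum>c\<in>C. bias c ^ j)
       = int (card C) * int (card {ks\<in>index_lists n j. unit_sum n ks = replicate n False})"
proof -
  have len: "length c = n" if "c \<in> C" for c
    using C that by (auto simp: binary_linear_code_def bvec_def)
  have dual_iff: "unit_sum n ks \<in> dual_code n C \<longleftrightarrow> unit_sum n ks = replicate n False"
    if "ks \<in> index_lists n j" for ks
  proof
    assume "unit_sum n ks \<in> dual_code n C"
    moreover have "wt (unit_sum n ks) \<le> j"
      using wt_unit_sum_le[of ks n] that by (simp add: index_lists_def)
    ultimately show "unit_sum n ks = replicate n False"
      using dual wt_eq_0_iff[of "unit_sum n ks"] by fastforce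
  qed (auto simp: dual_code_def bvec_def orth_zero_right)
  have "(\<Sum>c\<in>C. bias c ^ j)
      = (\<Sum>c\<in>C. \<Sum>ks\<in>index_lists n j. if orth c (unit_sum n ks) then 1 else -1)"
    by (intro sum.cong refl) (simp add: len bias_power_expand prod_bit_sign_eq_orth index_lists_def)
  also have "\<dots> = (\<Sum>ks\<in>index_lists n j. \<Sum>c\<in>C. if orth c (unit_sum n ks) then 1 else -1)"
    by (rule sum.swap)
  also have "\<dots> = (\<Sum>ks\<in>index_lists n j.
                    if unit_sum n ks = replicate n False then int (card C) else 0)"
    by (intro sum.cong refl) (simp add: sum_orth_sign[OF C] bvec_def dual_iff)
  also have "\<dots> = (\<Sum>ks\<in>{ks\<in>index_lists n j. unit_sum n ks = replicate n False}. int (card C))"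
    by (rule sum.inter_filter[OF finite_index_lists, symmetric])
  finally show ?thesis by simp
qed

definition space_moment :: "nat \<Rightarrow> nat \<Rightarrow> int" where
  "space_moment j n = (\<Sum>v\<in>bvec n. bias v ^ j)"

lemma code_moment_eq_space_moment:
  assumes "binary_linear_code n C" and "\<forall>v\<in>dual_code n C. 0 < wt v \<longrightarrow> j < wt v"
  shows "2 ^ n * (\<Sum>c\<in>C. bias c ^ j) = int (card C) * space_moment j n"
  using code_moment[OF assms] code_moment[OF binary_linear_code_bvec, of n j]
  by (simp add: space_moment_def dual_code_bvec card_bvec wt_def)

lemma space_moment_Suc:
  "space_moment j (Suc n) = (\<Sum>v\<in>bvec n. (bias v - 1) ^ j + (bias v + 1) ^ j)"
proof -
  have split: "bvec (Suc n) = Cons True ` bvec n \<union> Cons False ` bvec n"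
    by (auto simp: bvec_def length_Suc_conv)
  have "space_moment j (Suc n)
      = (\<Sum>v\<in>Cons True ` bvec n. bias v ^ j) + (\<Sum>v\<in>Cons False ` bvec n. bias v ^ j)"
    unfolding space_moment_def split by (rule sum.union_disjoint) (auto simp: finite_bvec)
  also have "\<dots> = (\<Sum>v\<in>bvec n. (bias v - 1) ^ j) + (\<Sum>v\<in>bvec n. (bias v + 1) ^ j)"
    by (simp add: sum.reindex bias_def bit_sign_def add.commute)
  finally show ?thesis by (simp add: sum.distrib)
qed

lemma space_moment_0: "space_moment 0 n = 2 ^ n"
  by (simp add: space_moment_def card_bvec)

lemma space_moment_2: "space_moment 2 n = 2 ^ n * int n"
proof (induction n)
  case (Suc n)
  have binomial: "\<And>x::int. (x - 1) ^ 2 + (x + 1) ^ 2 = 2 * x ^ 2 + 2" by algebra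
  have "space_moment 2 (Suc n) = 2 * space_moment 2 n + 2 * space_moment 0 n"
    unfolding space_moment_Suc binomial
    by (simp add: space_moment_def sum.distrib sum_distrib_left)
  then show ?case using Suc by (simp add: space_moment_0 algebra_simps)
qed (simp add: space_moment_def bvec_def bias_def)

lemma space_moment_4: "space_moment 4 n = 2 ^ n * (3 * int n ^ 2 - 2 * int n)"
proof (induction n)
  case (Suc n)
  have binomial: "\<And>x::int. (x - 1) ^ 4 + (x + 1) ^ 4 = 2 * x ^ 4 + 12 * x ^ 2 + 2" by algebra
  have "space_moment 4 (Suc n)
      = 2 * space_moment 4 n + 12 * space_moment 2 n + 2 * space_moment 0 n"
    unfolding space_moment_Suc binomial
    by (simp add: space_moment_def sum.distrib sum_distrib_left)
  then show ?case
    using Suc by (simp add: space_moment_0 space_moment_2 algebra_simps power2_eq_square)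
qed (simp add: space_moment_def bvec_def bias_def)

lemma space_moment_6: "space_moment 6 n = 2 ^ n * (15 * int n ^ 3 - 30 * int n ^ 2 + 16 * int n)"
proof (induction n)
  case (Suc n)
  have binomial: "\<And>x::int. (x - 1) ^ 6 + (x + 1) ^ 6 = 2 * x ^ 6 + 30 * x ^ 4 + 30 * x ^ 2 + 2" by algebra
  have "space_moment 6 (Suc n)
      = 2 * space_moment 6 n + 30 * space_moment 4 n + 30 * space_moment 2 n + 2 * space_moment 0 n"
    unfolding space_moment_Suc binomial
    by (simp add: space_moment_def sum.distrib sum_distrib_left)
  then show ?case
    using Suc by (simp add: space_moment_0 space_moment_2 space_moment_4
        algebra_simps power2_eq_square power3_eq_cube)
qed (simp add: space_moment_def bvec_def bias_def)

lemma space_moment_8: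
  "space_moment 8 n = 2 ^ n * (105 * int n ^ 4 - 420 * int n ^ 3 + 588 * int n ^ 2 - 272 * int n)"
proof (induction n)
  case (Suc n)
  have binomial: "\<And>x::int. (x - 1) ^ 8 + (x + 1) ^ 8
      = 2 * x ^ 8 + 56 * x ^ 6 + 140 * x ^ 4 + 56 * x ^ 2 + 2" by algebra
  have "space_moment 8 (Suc n) = 2 * space_moment 8 n + 56 * space_moment 6 n
      + 140 * space_moment 4 n + 56 * space_moment 2 n + 2 * space_moment 0 n"
    unfolding space_moment_Suc binomial
    by (simp add: space_moment_def sum.distrib sum_distrib_left)
  then show ?case
    using Suc by (simp add: space_moment_0 space_moment_2 space_moment_4 space_moment_6
        algebra_simps power2_eq_square power3_eq_cube power4_eq_xxxx)
qed (simp add: space_moment_def bvec_def bias_def)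

lemma code_moments_upto_8:
  assumes "binary_linear_code n C" and "\<forall>v\<in>dual_code n C. 0 < wt v \<longrightarrow> 8 < wt v"
  defines "N \<equiv> int (card C)" and "m \<equiv> int n"
  shows "(\<Sum>c\<in>C. bias c ^ 2) = N * m"
    and "(\<Sum>c\<in>C. bias c ^ 4) = N * (3 * m ^ 2 - 2 * m)"
    and "(\<Sum>c\<in>C. bias c ^ 6) = N * (15 * m ^ 3 - 30 * m ^ 2 + 16 * m)"
    and "(\<Sum>c\<in>C. bias c ^ 8) = N * (105 * m ^ 4 - 420 * m ^ 3 + 588 * m ^ 2 - 272 * m)"
proof -
  have moment: "2 ^ n * (\<Sum>c\<in>C. bias c ^ j) = N * space_moment j n" if "j \<le> 8" for j
    unfolding N_def
    by (rule code_moment_eq_space_moment[OF assms(1)]) (use assms(2) that in auto)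
  show "(\<Sum>c\<in>C. bias c ^ 2) = N * m"
    using moment[of 2] by (simp add: space_moment_2 m_def mult.left_commute)
  show "(\<Sum>c\<in>C. bias c ^ 4) = N * (3 * m ^ 2 - 2 * m)"
    using moment[of 4] by (simp add: space_moment_4 m_def mult.left_commute)
  show "(\<Sum>c\<in>C. bias c ^ 6) = N * (15 * m ^ 3 - 30 * m ^ 2 + 16 * m)"
    using moment[of 6] by (simp add: space_moment_6 m_def mult.left_commute)
  show "(\<Sum>c\<in>C. bias c ^ 8) = N * (105 * m ^ 4 - 420 * m ^ 3 + 588 * m ^ 2 - 272 * m)"
    using moment[of 8] by (simp add: space_moment_8 m_def mult.left_commute)
qed

section \<open>The contradiction\<close>

lemma three_square_levels_moments_le_4:
  fixes x :: "'a \<Rightarrow> int" and b m :: int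
  assumes "finite C" and "C \<noteq> {}"
    and levels: "\<forall>c\<in>C. x c ^ 2 = 0 \<or> x c ^ 2 = b \<or> x c ^ 2 = m ^ 2"
  defines "N \<equiv> int (card C)"
  assumes M2: "(\<Sum>c\<in>C. x c ^ 2) = N * m"
    and M4: "(\<Sum>c\<in>C. x c ^ 4) = N * (3 * m ^ 2 - 2 * m)"
    and M6: "(\<Sum>c\<in>C. x c ^ 6) = N * (15 * m ^ 3 - 30 * m ^ 2 + 16 * m)"
    and M8: "(\<Sum>c\<in>C. x c ^ 8) = N * (105 * m ^ 4 - 420 * m ^ 3 + 588 * m ^ 2 - 272 * m)"
  shows "m \<le> 4"
proof -
  have "N \<noteq> 0" using assms(1,2) by (simp add: N_def)
  have vanish: "x c ^ 2 * (x c ^ 2 - b) * (x c ^ 2 - m ^ 2) = 0" if "c \<in> C" for c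
    using levels that by auto
  have "0 = (\<Sum>c\<in>C. x c ^ 2 * (x c ^ 2 - b) * (x c ^ 2 - m ^ 2))"
    by (simp add: vanish)
  also have "\<dots> = (\<Sum>c\<in>C. x c ^ 6 - (b + m ^ 2) * x c ^ 4 + b * m ^ 2 * x c ^ 2)"
    by (intro sum.cong refl) algebra
  also have "\<dots> = (\<Sum>c\<in>C. x c ^ 6) - (b + m ^ 2) * (\<Sum>c\<in>C. x c ^ 4) + b * m ^ 2 * (\<Sum>c\<in>C. x c ^ 2)"
    by (simp only: sum.distrib sum_subtractf sum_distrib_left)
  also have "\<dots> = N * (m * (m - 1) * (m - 2) * (b - 3 * m + 8))"
    unfolding M2 M4 M6 by algebra
  finally consider "m * (m - 1) * (m - 2) = 0" | "b = 3 * m - 8"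
    using \<open>N \<noteq> 0\<close> by force
  then show ?thesis
  proof cases
    case 2
    have "0 = (\<Sum>c\<in>C. x c ^ 2 * (x c ^ 2 * (x c ^ 2 - b) * (x c ^ 2 - m ^ 2)))"
      by (simp add: vanish)
    also have "\<dots> = (\<Sum>c\<in>C. x c ^ 8 - (b + m ^ 2) * x c ^ 6 + b * m ^ 2 * x c ^ 4)"
      by (intro sum.cong refl) algebra
    also have "\<dots> = (\<Sum>c\<in>C. x c ^ 8) - (b + m ^ 2) * (\<Sum>c\<in>C. x c ^ 6) + b * m ^ 2 * (\<Sum>c\<in>C. x c ^ 4)"
      by (simp only: sum.distrib sum_subtractf sum_distrib_left)
    also have "\<dots> = - 6 * N * (m * (m - 1) * (m - 2) * (m - 3) * (m - 4))"
      unfolding M4 M6 M8 2 by algebra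
    finally have "m * (m - 1) * (m - 2) * (m - 3) * (m - 4) = 0"
      using \<open>N \<noteq> 0\<close> by simp
    then show ?thesis by auto
  qed auto
qed

lemma bias_squared_cases:
  assumes "length c = n" and "even n"
    and "wt c \<in> {0, d, n div 2, n - d, n}"
  shows "bias c ^ 2 = 0 \<or> bias c ^ 2 = (int n - 2 * int d) ^ 2 \<or> bias c ^ 2 = int n ^ 2"
proof -
  have "bias c = int n - 2 * int (wt c)" using assms(1) by (simp add: bias_eq)
  moreover have "2 * int (n div 2) = int n" using assms(2) by auto
  ultimately consider "bias c = int n" | "bias c = int n - 2 * int d" | "bias c = 0"
    | "bias c = - (int n - 2 * int d)" | "bias c = - int n"
    using assms(3) by (cases "d \<le> n") (auto simp: of_nat_diff)
  then show ?thesis by cases (simp_all add: power2_commute[of "int n"])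
qed

theorem theorem4p2:
  fixes n k d dperp t :: nat and C :: "bool list set"
  assumes "is_nkd_code n k d C"
    and "replicate n True \<in> C"
    and "is_min_weight (dual_code n C) dperp"
    and "0 < t"
    and "int dperp - int t = 3"
    and "card {u. (\<exists>c\<in>C. wt c = u) \<and> 0 < u \<and> u \<le> n - t} = 3"
    and "even n"
    and "nz_weights C = {d, n div 2, n - d, n}"
    and "dperp > 8"
  shows False
proof -
  have code: "binary_linear_code n C" using assms(1) by (simp add: is_nkd_code_def)
  then have len: "length c = n" if "c \<in> C" for c
    using that by (auto simp: binary_linear_code_def bvec_def)
  have finite: "finite C" and nonempty: "C \<noteq> {}"
    using code finite_subset[OF _ finite_bvec] by (auto simp: binary_linear_code_def)
  have dual: "\<forall>v\<in>dual_code n C. 0 < wt v \<longrightarrow> 8 < wt v"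
    using assms(3,9) by (fastforce simp: is_min_weight_def)
  have levels: "\<forall>c\<in>C. bias c ^ 2 = 0 \<or> bias c ^ 2 = (int n - 2 * int d) ^ 2 \<or> bias c ^ 2 = int n ^ 2"
  proof
    fix c assume "c \<in> C"
    then have "wt c = 0 \<or> wt c \<in> nz_weights C" by (auto simp: nz_weights_def)
    then have "wt c \<in> {0, d, n div 2, n - d, n}" unfolding assms(8) by auto
    then show "bias c ^ 2 = 0 \<or> bias c ^ 2 = (int n - 2 * int d) ^ 2 \<or> bias c ^ 2 = int n ^ 2"
      by (rule bias_squared_cases[OF len[OF \<open>c \<in> C\<close>] assms(7)])
  qed
  have "int n \<le> 4"
    by (rule three_square_levels_moments_le_4[OF finite nonempty levels
          code_moments_upto_8[OF code dual]])
  moreover have "dperp \<le> n"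
    using assms(3) wt_le_length by (fastforce simp: is_min_weight_def dual_code_def bvec_def)
  ultimately show False using assms(9) by simp
qed

end
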